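(* Let $G=\mathbb{Z}_{d_1}\times\cdots\times\mathbb{Z}_{d_m}$ and $N=\mathbb{Z}_{d'_1}\times\cdots\times\mathbb{Z}_{d'_{m'}}$ be groups of the same order $n$, and let $f:G\to\tilde N$ be a function. For $r\in N$ and $k\in G$ define $v^{(r)}_k\in\mathbb{C}^G$ by $$(v^{(r)}_k)_\ell=\frac1{\sqrt n}\,\chi_k(\ell)\,\chi_r(f(\ell)),\qquad \ell\in G,$$ and let $M_r$ be the $n\times n$ matrix with columns $v^{(r)}_k$, $k\in G$. Then $\{M_r: r\in N\}$ is a complete system of mutually unbiased Hadamards if and only if for all $g_1,g_2,g_3,g_4\in G$ with $g_1+g_2=g_3+g_4$ and $\{g_1,g_2\}\neq\{g_3,g_4\}$ (as multisets) we have $f(g_1)+f(g_2)-f(g_3)-f(g_4)\in\tilde N^*$.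
   Context: $\mathbb{R}_d$ is the additive group of reals modulo $d$; $\tilde N=\mathbb{R}_{d'_1}\times\cdots\times\mathbb{R}_{d'_{m'}}\supseteq N$. For $a\in G$, $b\in G$: $\chi_a(b)=\exp(\sum_{j}\frac{2\pi i}{d_j}a_jb_j)$; for $r\in N$, $x\in\tilde N$: $\chi_r(x)=\exp(\sum_j\frac{2\pi i}{d'_j}r_jx_j)$. $\tilde N^*$ is the set of $x\in\tilde N$ having at least one component $x_j$ that is an integer not congruent to $0$ mod $d'_j$. A complex Hadamard matrix is a unitary $n\times n$ matrix all of whose entries have absolute value $1/\sqrt n$; two are mutually unbiased if $|\langle x|y\rangle|=1/\sqrt n$ for every column $x$ of one and column $y$ of the other; a complete system of mutually unbiased Hadamards is a set of $n$ pairwise mutually unbiased complex Hadamard $n\times n$ matrices. *)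

theory Defs
  imports Complex_Main "HOL-Library.Multiset"
begin

text \<open>Finite abelian group Z_{d_0} x ... x Z_{d_{m-1}}: elements are integer vectors
  (functions nat => int) with 0 <= g j < d j for j < m and g j = 0 for j >= m.\<close>
definition zgrp :: "nat \<Rightarrow> (nat \<Rightarrow> nat) \<Rightarrow> (nat \<Rightarrow> int) set" where
  "zgrp m d = {g. (\<forall>j<m. 0 \<le> g j \<and> g j < int (d j)) \<and> (\<forall>j\<ge>m. g j = 0)}"

definition zadd :: "nat \<Rightarrow> (nat \<Rightarrow> nat) \<Rightarrow> (nat \<Rightarrow> int) \<Rightarrow> (nat \<Rightarrow> int) \<Rightarrow> (nat \<Rightarrow> int)" where
  "zadd m d g h = (\<lambda>j. if j < m then (g j + h j) mod int (d j) else 0)"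

definition rmod :: "real \<Rightarrow> real \<Rightarrow> real" where
  "rmod x d = x - d * of_int \<lfloor>x / d\<rfloor>"

text \<open>The torus R_{d'_0} x ... x R_{d'_{m'-1}}: real vectors with 0 <= x j < d' j for j < m',
  and x j = 0 for j >= m'.\<close>
definition rtorus :: "nat \<Rightarrow> (nat \<Rightarrow> nat) \<Rightarrow> (nat \<Rightarrow> real) set" where
  "rtorus m d = {x. (\<forall>j<m. 0 \<le> x j \<and> x j < real (d j)) \<and> (\<forall>j\<ge>m. x j = 0)}"

definition tcomb :: "nat \<Rightarrow> (nat \<Rightarrow> nat) \<Rightarrow> (nat \<Rightarrow> real) \<Rightarrow> (nat \<Rightarrow> real) \<Rightarrow> (nat \<Rightarrow> real)
     \<Rightarrow> (nat \<Rightarrow> real) \<Rightarrow> (nat \<Rightarrow> real)" where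
  "tcomb m d a b c e = (\<lambda>j. if j < m then rmod (a j + b j - c j - e j) (real (d j)) else 0)"

definition tstar :: "nat \<Rightarrow> (nat \<Rightarrow> nat) \<Rightarrow> (nat \<Rightarrow> real) set" where
  "tstar m d = {x \<in> rtorus m d. \<exists>j<m. \<exists>k::int. x j = of_int k \<and> \<not> (int (d j) dvd k)}"

definition chiG :: "nat \<Rightarrow> (nat \<Rightarrow> nat) \<Rightarrow> (nat \<Rightarrow> int) \<Rightarrow> (nat \<Rightarrow> int) \<Rightarrow> complex" where
  "chiG m d a b = exp (\<Sum>j<m. 2 * of_real pi * \<i> * of_int (a j) * of_int (b j) / of_nat (d j))"

definition chiN :: "nat \<Rightarrow> (nat \<Rightarrow> nat) \<Rightarrow> (nat \<Rightarrow> int) \<Rightarrow> (nat \<Rightarrow> real) \<Rightarrow> complex" where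
  "chiN m d r x = exp (\<Sum>j<m. 2 * of_real pi * \<i> * of_int (r j) * of_real (x j) / of_nat (d j))"

text \<open>Matrices indexed by a finite set I: M i k is the entry in row i, column k;
  column k is the vector (\<lambda>i. M i k).  Inner product <x|y> = sum conj(x i) * y i.\<close>
definition inner_c :: "'i set \<Rightarrow> ('i \<Rightarrow> complex) \<Rightarrow> ('i \<Rightarrow> complex) \<Rightarrow> complex" where
  "inner_c I x y = (\<Sum>i\<in>I. cnj (x i) * y i)"

definition col :: "('i \<Rightarrow> 'i \<Rightarrow> complex) \<Rightarrow> 'i \<Rightarrow> ('i \<Rightarrow> complex)" where
  "col M k = (\<lambda>i. M i k)"

definition unitary_mat :: "'i set \<Rightarrow> ('i \<Rightarrow> 'i \<Rightarrow> complex) \<Rightarrow> bool" where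
  "unitary_mat I M \<longleftrightarrow>
     (\<forall>i\<in>I. \<forall>k\<in>I. (\<Sum>j\<in>I. cnj (M j i) * M j k) = (if i = k then 1 else 0)) \<and>
     (\<forall>i\<in>I. \<forall>k\<in>I. (\<Sum>j\<in>I. M i j * cnj (M k j)) = (if i = k then 1 else 0))"

definition complex_hadamard :: "'i set \<Rightarrow> ('i \<Rightarrow> 'i \<Rightarrow> complex) \<Rightarrow> bool" where
  "complex_hadamard I M \<longleftrightarrow> unitary_mat I M \<and>
     (\<forall>i\<in>I. \<forall>k\<in>I. cmod (M i k) = 1 / sqrt (real (card I)))"

definition mutually_unbiased :: "'i set \<Rightarrow> ('i \<Rightarrow> 'i \<Rightarrow> complex) \<Rightarrow> ('i \<Rightarrow> 'i \<Rightarrow> complex) \<Rightarrow> bool" where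
  "mutually_unbiased I A B \<longleftrightarrow>
     (\<forall>k\<in>I. \<forall>k'\<in>I. cmod (inner_c I (col A k) (col B k')) = 1 / sqrt (real (card I)))"

text \<open>A complete system of mutually unbiased Hadamards: a set of card I pairwise mutually unbiased
  complex Hadamard matrices.  Matrices are compared on I x I, so we use matrices that are 0 off I x I.\<close>
definition complete_MUH :: "'i set \<Rightarrow> ('i \<Rightarrow> 'i \<Rightarrow> complex) set \<Rightarrow> bool" where
  "complete_MUH I S \<longleftrightarrow> finite S \<and> card S = card I \<and>
     (\<forall>M\<in>S. complex_hadamard I M) \<and>
     (\<forall>A\<in>S. \<forall>B\<in>S. A \<noteq> B \<longrightarrow> mutually_unbiased I A B)"

definition Mr :: "nat \<Rightarrow> (nat \<Rightarrow> nat) \<Rightarrow> nat \<Rightarrow> (nat \<Rightarrow> nat) \<Rightarrow> ((nat \<Rightarrow> int) \<Rightarrow> (nat \<Rightarrow> real))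
     \<Rightarrow> (nat \<Rightarrow> int) \<Rightarrow> (nat \<Rightarrow> int) \<Rightarrow> (nat \<Rightarrow> int) \<Rightarrow> complex" where
  "Mr m d m' d' f r = (\<lambda>l k. if l \<in> zgrp m d \<and> k \<in> zgrp m d then
      chiG m d k l * chiN m' d' r (f l) / of_real (sqrt (real (card (zgrp m d)))) else 0)"

end

theory Submission
  imports Defs
begin

text \<open>
  Proof idea (fourth-moment argument).  Let \<open>h_r(l) = \<chi>_r(f l)\<close>, \<open>u = conj(h_r) h_{r'}\<close> and
  \<open>z(k,k') = \<Sum>_l conj(\<chi>_k(l)) \<chi>_{k'}(l) u(l)\<close>, so that the inner product of column \<open>k\<close>
  of \<open>M_r\<close> with column \<open>k'\<close> of \<open>M_{r'}\<close> is \<open>z(k,k')/n\<close>; the two matrices are mutually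
  unbiased iff \<open>|z(k,k')|^2 = n\<close> for all \<open>k, k'\<close>.  By Parseval \<open>\<Sum> |z|^2 = n^3\<close>, and the
  fourth moment \<open>\<Sum> |z|^4\<close> is \<open>n^2\<close> times the additive energy of \<open>u\<close>.  Summing over all pairs
  \<open>r \<noteq> r'\<close> gives the identity
     \<open>\<Sum>_{r\<noteq>r'} \<Sum>_{k,k'} (|z|^2 - n)^2 = n^2 \<Sum>_{a+b=c+e, nontrivial} |W(a,b,c,e)|^2\<close>
  with \<open>W = \<Sum>_r h_r(a) h_r(b) conj(h_r(c) h_r(e))\<close>, so both sides vanish simultaneously.
  For the concrete characters, \<open>W = \<Sum>_r \<chi>_r(f a + f b - f c - f e)\<close> is a product of
  geometric sums, which vanishes iff that element lies in \<open>\<tilde>N^*\<close>.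
\<close>

lemma sum_swap_outer_inner:
  "(\<Sum>k\<in>A. \<Sum>k'\<in>B. \<Sum>p\<in>C. \<Sum>p'\<in>D. P k k' p p') = (\<Sum>p\<in>C. \<Sum>p'\<in>D. \<Sum>k\<in>A. \<Sum>k'\<in>B. P k k' p p')"
proof -
  have "(\<Sum>k\<in>A. \<Sum>k'\<in>B. \<Sum>p\<in>C. \<Sum>p'\<in>D. P k k' p p') = (\<Sum>k\<in>A. \<Sum>p\<in>C. \<Sum>k'\<in>B. \<Sum>p'\<in>D. P k k' p p')"
    by (rule sum.cong[OF refl], rule sum.swap)
  also have "\<dots> = (\<Sum>p\<in>C. \<Sum>k\<in>A. \<Sum>k'\<in>B. \<Sum>p'\<in>D. P k k' p p')" by (rule sum.swap)
  also have "\<dots> = (\<Sum>p\<in>C. \<Sum>k\<in>A. \<Sum>p'\<in>D. \<Sum>k'\<in>B. P k k' p p')"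
    by (rule sum.cong[OF refl], rule sum.cong[OF refl], rule sum.swap)
  also have "\<dots> = (\<Sum>p\<in>C. \<Sum>p'\<in>D. \<Sum>k\<in>A. \<Sum>k'\<in>B. P k k' p p')"
    by (rule sum.cong[OF refl], rule sum.swap)
  finally show ?thesis .
qed

text \<open>Expansion of a double sum of squared moduli of bilinear expressions; this is the common
  computation behind Parseval's identity and the fourth-moment identity below.\<close>
lemma double_sum_norm_square_expand:
  fixes \<alpha> \<beta> :: "'k \<Rightarrow> 'p \<Rightarrow> complex" and v :: "'p \<Rightarrow> complex"
  shows "(\<Sum>k\<in>K. \<Sum>k'\<in>K. (\<Sum>p\<in>P. \<alpha> k p * \<beta> k' p * v p) * cnj (\<Sum>p\<in>P. \<alpha> k p * \<beta> k' p * v p))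
   = (\<Sum>p\<in>P. \<Sum>p'\<in>P. v p * cnj (v p') * (\<Sum>k\<in>K. \<alpha> k p * cnj (\<alpha> k p')) * (\<Sum>k'\<in>K. \<beta> k' p * cnj (\<beta> k' p')))"
proof -
  have "(\<Sum>k\<in>K. \<Sum>k'\<in>K. (\<Sum>p\<in>P. \<alpha> k p * \<beta> k' p * v p) * cnj (\<Sum>p\<in>P. \<alpha> k p * \<beta> k' p * v p))
     = (\<Sum>k\<in>K. \<Sum>k'\<in>K. \<Sum>p\<in>P. \<Sum>p'\<in>P. (\<alpha> k p * \<beta> k' p * v p) * cnj (\<alpha> k p' * \<beta> k' p' * v p'))"
    by (simp add: sum_product cnj_sum)
  also have "\<dots> = (\<Sum>p\<in>P. \<Sum>p'\<in>P. \<Sum>k\<in>K. \<Sum>k'\<in>K. (\<alpha> k p * \<beta> k' p * v p) * cnj (\<alpha> k p' * \<beta> k' p' * v p'))"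
    by (rule sum_swap_outer_inner)
  also have "\<dots> = (\<Sum>p\<in>P. \<Sum>p'\<in>P. v p * cnj (v p') * (\<Sum>k\<in>K. \<alpha> k p * cnj (\<alpha> k p')) * (\<Sum>k'\<in>K. \<beta> k' p * cnj (\<beta> k' p')))"
    by (simp add: sum_product sum_distrib_left mult_ac)
  finally show ?thesis .
qed

lemma sum_pairs: "(\<Sum>p\<in>A\<times>B. G p) = (\<Sum>a\<in>A. \<Sum>b\<in>B. G (a,b))"
  by (simp add: sum.cartesian_product)

lemma sum2_nonneg_eq_0_iff:
  fixes g :: "'a \<Rightarrow> 'b \<Rightarrow> real"
  assumes "finite A" "finite B" "\<And>x y. x\<in>A \<Longrightarrow> y\<in>B \<Longrightarrow> 0 \<le> g x y"
  shows "(\<Sum>x\<in>A. \<Sum>y\<in>B. g x y) = 0 \<longleftrightarrow> (\<forall>x\<in>A. \<forall>y\<in>B. g x y = 0)"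
proof -
  have "(\<Sum>x\<in>A. \<Sum>y\<in>B. g x y) = 0 \<longleftrightarrow> (\<forall>x\<in>A. (\<Sum>y\<in>B. g x y) = 0)"
    using assms by (intro sum_nonneg_eq_0_iff) (auto intro: sum_nonneg)
  also have "\<dots> \<longleftrightarrow> (\<forall>x\<in>A. \<forall>y\<in>B. g x y = 0)"
    using assms by (simp add: sum_nonneg_eq_0_iff)
  finally show ?thesis .
qed

lemma norm_div_eq_inverse_sqrt_iff:
  fixes c :: real and n :: nat
  assumes "0 \<le> c" "0 < n"
  shows "c / real n = 1 / sqrt (real n) \<longleftrightarrow> c ^ 2 = real n"
proof -
  have sn: "0 < sqrt (real n)" using assms by simp
  have "c / real n = 1 / sqrt (real n) \<longleftrightarrow> c = real n / sqrt (real n)"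
    using assms sn by (auto simp: field_simps)
  also have "real n / sqrt (real n) = sqrt (real n)" by (simp add: real_div_sqrt)
  also have "c = sqrt (real n) \<longleftrightarrow> c ^ 2 = real n"
    using assms real_sqrt_unique[of c "real n"] by auto
  finally show ?thesis .
qed

section \<open>Abstract character tables\<close>

locale character_table =
  fixes I :: "'g set" and chi :: "'g \<Rightarrow> 'g \<Rightarrow> complex" and pl :: "'g \<Rightarrow> 'g \<Rightarrow> 'g" and n :: nat
  assumes fin: "finite I" and cardI: "card I = n"
    and pl_in: "a\<in>I \<Longrightarrow> b\<in>I \<Longrightarrow> pl a b \<in> I"
    and pl_comm: "pl a b = pl b a"
    and mult: "k\<in>I \<Longrightarrow> a\<in>I \<Longrightarrow> b\<in>I \<Longrightarrow> chi k a * chi k b = chi k (pl a b)"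
    and orth: "a\<in>I \<Longrightarrow> b\<in>I \<Longrightarrow> (\<Sum>k\<in>I. cnj (chi k a) * chi k b) = (if a = b then of_nat n else 0)"
    and unimodular: "k\<in>I \<Longrightarrow> a\<in>I \<Longrightarrow> cmod (chi k a) = 1"
    and sym: "k\<in>I \<Longrightarrow> a\<in>I \<Longrightarrow> chi k a = chi a k"
begin

lemma orth_conj: "a\<in>I \<Longrightarrow> b\<in>I \<Longrightarrow> (\<Sum>k\<in>I. chi k a * cnj (chi k b)) = (if a = b then of_nat n else 0)"
proof -
  assume "a\<in>I" "b\<in>I"
  have "(\<Sum>k\<in>I. chi k a * cnj (chi k b)) = cnj (\<Sum>k\<in>I. cnj (chi k a) * chi k b)"
    by (simp add: cnj_sum mult.commute)
  then show ?thesis using orth[OF \<open>a\<in>I\<close> \<open>b\<in>I\<close>] by simp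
qed

lemma orth_rows: "a\<in>I \<Longrightarrow> b\<in>I \<Longrightarrow> (\<Sum>k\<in>I. cnj (chi a k) * chi b k) = (if a = b then of_nat n else 0)"
proof -
  assume ab: "a\<in>I" "b\<in>I"
  have "(\<Sum>k\<in>I. cnj (chi a k) * chi b k) = (\<Sum>k\<in>I. cnj (chi k a) * chi k b)"
    by (rule sum.cong[OF refl]) (simp add: sym[OF ab(1)] sym[OF ab(2)])
  then show ?thesis using orth[OF ab] by simp
qed

text \<open>Orthogonality applied to sums \<open>a + b\<close> and \<open>c + e\<close>: the source of the additive structure.\<close>
lemma orth_sums: "a\<in>I \<Longrightarrow> b\<in>I \<Longrightarrow> c\<in>I \<Longrightarrow> e\<in>I \<Longrightarrow>
  (\<Sum>k\<in>I. cnj (chi k a) * cnj (chi k b) * (chi k c * chi k e)) = (if pl a b = pl c e then of_nat n else 0)"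
proof -
  assume as: "a\<in>I" "b\<in>I" "c\<in>I" "e\<in>I"
  have "(\<Sum>k\<in>I. cnj (chi k a) * cnj (chi k b) * (chi k c * chi k e)) = (\<Sum>k\<in>I. cnj (chi k (pl a b)) * chi k (pl c e))"
    by (rule sum.cong[OF refl]) (metis as mult complex_cnj_mult)
  then show ?thesis using orth[OF pl_in pl_in] as by simp
qed

lemma orth_sums_conj: "a\<in>I \<Longrightarrow> b\<in>I \<Longrightarrow> c\<in>I \<Longrightarrow> e\<in>I \<Longrightarrow>
  (\<Sum>k\<in>I. chi k a * chi k b * (cnj (chi k c) * cnj (chi k e))) = (if pl a b = pl c e then of_nat n else 0)"
proof -
  assume as: "a\<in>I" "b\<in>I" "c\<in>I" "e\<in>I"
  have "(\<Sum>k\<in>I. chi k a * chi k b * (cnj (chi k c) * cnj (chi k e)))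
      = cnj (\<Sum>k\<in>I. cnj (chi k a) * cnj (chi k b) * (chi k c * chi k e))"
    by (simp add: cnj_sum)
  then show ?thesis using orth_sums[OF as] by simp
qed

definition fourier :: "('g \<Rightarrow> complex) \<Rightarrow> 'g \<Rightarrow> 'g \<Rightarrow> complex" where
  "fourier u k k' = (\<Sum>l\<in>I. cnj (chi k l) * chi k' l * u l)"

definition energy :: "('g \<Rightarrow> complex) \<Rightarrow> complex" where
  "energy u = (\<Sum>p\<in>I\<times>I. \<Sum>p'\<in>I\<times>I. if pl (fst p) (snd p) = pl (fst p') (snd p')
      then u (fst p) * u (snd p) * cnj (u (fst p')) * cnj (u (snd p')) else 0)"

lemma parseval: "(\<Sum>k\<in>I. \<Sum>k'\<in>I. fourier u k k' * cnj (fourier u k k')) = of_nat n ^ 2 * (\<Sum>l\<in>I. u l * cnj (u l))"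
proof -
  have "(\<Sum>k\<in>I. \<Sum>k'\<in>I. fourier u k k' * cnj (fourier u k k'))
    = (\<Sum>p\<in>I. \<Sum>p'\<in>I. u p * cnj (u p') * (\<Sum>k\<in>I. cnj (chi k p) * cnj (cnj (chi k p'))) * (\<Sum>k'\<in>I. chi k' p * cnj (chi k' p')))"
    unfolding fourier_def by (rule double_sum_norm_square_expand[where \<alpha>="\<lambda>k p. cnj (chi k p)" and \<beta>=chi])
  also have "\<dots> = (\<Sum>p\<in>I. \<Sum>p'\<in>I. if p = p' then u p * cnj (u p') * of_nat n ^ 2 else 0)"
    by (rule sum.cong[OF refl], rule sum.cong[OF refl]) (simp add: orth orth_conj power2_eq_square)
  also have "\<dots> = of_nat n ^ 2 * (\<Sum>l\<in>I. u l * cnj (u l))"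
    by (simp add: fin sum_distrib_left mult.commute)
  finally show ?thesis .
qed

lemma fourier_square: "fourier u k k' * fourier u k k' =
  (\<Sum>p\<in>I\<times>I. cnj (chi k (fst p)) * cnj (chi k (snd p)) * (chi k' (fst p) * chi k' (snd p)) * (u (fst p) * u (snd p)))"
  unfolding fourier_def sum_product sum.cartesian_product by (rule sum.cong[OF refl]) (auto simp: mult_ac)

lemma fourth_moment:
  "(\<Sum>k\<in>I. \<Sum>k'\<in>I. (fourier u k k' * fourier u k k') * cnj (fourier u k k' * fourier u k k')) = of_nat n ^ 2 * energy u"
proof -
  have "(\<Sum>k\<in>I. \<Sum>k'\<in>I. (fourier u k k' * fourier u k k') * cnj (fourier u k k' * fourier u k k'))
    = (\<Sum>p\<in>I\<times>I. \<Sum>p'\<in>I\<times>I. (u (fst p) * u (snd p)) * cnj (u (fst p') * u (snd p')) *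
        (\<Sum>k\<in>I. (cnj (chi k (fst p)) * cnj (chi k (snd p))) * cnj (cnj (chi k (fst p')) * cnj (chi k (snd p'))))
      * (\<Sum>k'\<in>I. (chi k' (fst p) * chi k' (snd p)) * cnj (chi k' (fst p') * chi k' (snd p'))))"
    unfolding fourier_square by (rule double_sum_norm_square_expand)
  also have "\<dots> = (\<Sum>p\<in>I\<times>I. \<Sum>p'\<in>I\<times>I. of_nat n ^ 2 * (if pl (fst p) (snd p) = pl (fst p') (snd p')
      then u (fst p) * u (snd p) * cnj (u (fst p')) * cnj (u (snd p')) else 0))"
    by (rule sum.cong[OF refl], rule sum.cong[OF refl]) (auto simp: orth_sums orth_sums_conj power2_eq_square)
  also have "\<dots> = of_nat n ^ 2 * energy u" by (simp add: energy_def sum_distrib_left)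
  finally show ?thesis .
qed

end

section \<open>Families of twisted character bases\<close>

locale twisted_family = character_table I chi pl n for I :: "'g set" and chi pl n +
  fixes NN :: "'r set" and h :: "'r \<Rightarrow> 'g \<Rightarrow> complex"
  assumes finN: "finite NN" and cardN: "card NN = n"
    and h_unimodular: "r\<in>NN \<Longrightarrow> l\<in>I \<Longrightarrow> cmod (h r l) = 1"
    and npos: "0 < n"
begin

definition ratio :: "'r \<Rightarrow> 'r \<Rightarrow> 'g \<Rightarrow> complex" where
  "ratio r r' l = cnj (h r l) * h r' l"

definition corr :: "'g \<times> 'g \<Rightarrow> 'g \<times> 'g \<Rightarrow> complex" where
  "corr p p' = (\<Sum>r\<in>NN. h r (fst p) * h r (snd p) * cnj (h r (fst p')) * cnj (h r (snd p')))"

definition same_sum :: "'g \<times> 'g \<Rightarrow> 'g \<times> 'g \<Rightarrow> bool" where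
  "same_sum p p' \<longleftrightarrow> pl (fst p) (snd p) = pl (fst p') (snd p')"

definition trivial_quad :: "'g \<times> 'g \<Rightarrow> 'g \<times> 'g \<Rightarrow> bool" where
  "trivial_quad p p' \<longleftrightarrow> (fst p = fst p' \<and> snd p = snd p') \<or> (fst p = snd p' \<and> snd p = fst p')"

definition mat :: "'r \<Rightarrow> 'g \<Rightarrow> 'g \<Rightarrow> complex" where
  "mat r l k = (if l \<in> I \<and> k \<in> I then chi k l * h r l / of_real (sqrt (real n)) else 0)"

lemma h_cnj_mult: "r\<in>NN \<Longrightarrow> l\<in>I \<Longrightarrow> cnj (h r l) * h r l = 1"
  using h_unimodular complex_norm_square by (metis mult.commute of_real_1 power_one)

lemma ratio_cnj_mult: "r\<in>NN \<Longrightarrow> r'\<in>NN \<Longrightarrow> l\<in>I \<Longrightarrow> ratio r r' l * cnj (ratio r r' l) = 1"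
  unfolding ratio_def using h_cnj_mult
  by (metis complex_cnj_cnj complex_cnj_mult mult.commute mult.left_commute mult_1_right)

definition moment4 :: "'r \<Rightarrow> 'r \<Rightarrow> real" where
  "moment4 r r' = (\<Sum>k\<in>I. \<Sum>k'\<in>I. cmod (fourier (ratio r r') k k') ^ 4)"

text \<open>Total squared deviation of \<open>|z|^2\<close> from \<open>n\<close>; it vanishes iff \<open>mat r\<close>, \<open>mat r'\<close> are unbiased.\<close>
definition deviation :: "'r \<Rightarrow> 'r \<Rightarrow> real" where
  "deviation r r' = (\<Sum>k\<in>I. \<Sum>k'\<in>I. (cmod (fourier (ratio r r') k k') ^ 2 - real n) ^ 2)"

lemma moment2: "r\<in>NN \<Longrightarrow> r'\<in>NN \<Longrightarrow> (\<Sum>k\<in>I. \<Sum>k'\<in>I. cmod (fourier (ratio r r') k k') ^ 2) = real n ^ 3"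
proof -
  assume rr: "r\<in>NN" "r'\<in>NN"
  have "complex_of_real (\<Sum>k\<in>I. \<Sum>k'\<in>I. cmod (fourier (ratio r r') k k') ^ 2)
      = (\<Sum>k\<in>I. \<Sum>k'\<in>I. fourier (ratio r r') k k' * cnj (fourier (ratio r r') k k'))"
    unfolding of_real_sum by (rule sum.cong[OF refl])+ (rule complex_norm_square)
  also have "\<dots> = of_nat n ^ 2 * (\<Sum>l\<in>I. 1)"
    unfolding parseval using ratio_cnj_mult[OF rr] by simp
  also have "\<dots> = complex_of_real (real n ^ 3)" using cardI by (simp add: power_def)
  finally show ?thesis using of_real_eq_iff by blast
qed

lemma moment4_energy: "complex_of_real (moment4 r r') = of_nat n ^ 2 * energy (ratio r r')"
proof -
  have "complex_of_real (cmod w ^ 4) = (w * w) * cnj (w * w)" for w :: complex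
  proof -
    have "cmod w ^ 4 = cmod (w * w) ^ 2" by (simp add: norm_mult power2_eq_square power4_eq_xxxx)
    then show ?thesis using complex_norm_square[of "w * w"] by simp
  qed
  then show ?thesis unfolding moment4_def of_real_sum fourth_moment[symmetric] by simp
qed

lemma fourier_diag: "r\<in>NN \<Longrightarrow> k\<in>I \<Longrightarrow> k'\<in>I \<Longrightarrow> fourier (ratio r r) k k' = (if k = k' then of_nat n else 0)"
proof -
  assume a: "r\<in>NN" "k\<in>I" "k'\<in>I"
  have "fourier (ratio r r) k k' = (\<Sum>l\<in>I. cnj (chi k l) * chi k' l)"
    unfolding fourier_def ratio_def by (rule sum.cong[OF refl]) (simp add: h_cnj_mult a)
  then show ?thesis using orth_rows[OF a(2,3)] by simp
qed

lemma moment4_diag: "r\<in>NN \<Longrightarrow> moment4 r r = real n ^ 5"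
proof -
  assume a: "r\<in>NN"
  have "moment4 r r = (\<Sum>k\<in>I. \<Sum>k'\<in>I. if k = k' then real n ^ 4 else 0)"
    unfolding moment4_def by (rule sum.cong[OF refl])+ (simp add: fourier_diag a)
  also have "\<dots> = real n ^ 5" using fin cardI by (simp add: eval_nat_numeral)
  finally show ?thesis .
qed

lemma deviation_moment4: "r\<in>NN \<Longrightarrow> r'\<in>NN \<Longrightarrow> deviation r r' = moment4 r r' - real n ^ 4"
proof -
  assume rr: "r\<in>NN" "r'\<in>NN"
  let ?c = "\<lambda>k k'. cmod (fourier (ratio r r') k k')"
  have "deviation r r' = (\<Sum>k\<in>I. \<Sum>k'\<in>I. ?c k k' ^ 4 - 2 * real n * ?c k k' ^ 2 + real n ^ 2)"
    unfolding deviation_def by (rule sum.cong[OF refl])+ (simp add: power2_eq_square power4_eq_xxxx algebra_simps)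
  also have "\<dots> = moment4 r r' - 2 * real n * (\<Sum>k\<in>I. \<Sum>k'\<in>I. ?c k k' ^ 2) + real n ^ 4"
    unfolding moment4_def using cardI by (simp add: sum.distrib sum_subtractf sum_distrib_left power_def)
  also have "\<dots> = moment4 r r' - real n ^ 4" using moment2[OF rr] by (simp add: power_def)
  finally show ?thesis .
qed

lemma sum_energy_corr: "(\<Sum>r\<in>NN. \<Sum>r'\<in>NN. energy (ratio r r')) =
  (\<Sum>p\<in>I\<times>I. \<Sum>p'\<in>I\<times>I. if same_sum p p' then cnj (corr p p') * corr p p' else 0)"
proof -
  define w where "w r p p' = h r (fst p) * h r (snd p) * cnj (h r (fst p')) * cnj (h r (snd p'))" for r p p'
  have "(\<Sum>r\<in>NN. \<Sum>r'\<in>NN. energy (ratio r r')) =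
     (\<Sum>r\<in>NN. \<Sum>r'\<in>NN. \<Sum>p\<in>I\<times>I. \<Sum>p'\<in>I\<times>I. if same_sum p p' then cnj (w r p p') * w r' p p' else 0)"
    unfolding energy_def same_sum_def ratio_def w_def
    by (rule sum.cong[OF refl])+ (simp add: mult_ac)
  also have "\<dots> = (\<Sum>p\<in>I\<times>I. \<Sum>p'\<in>I\<times>I. \<Sum>r\<in>NN. \<Sum>r'\<in>NN. if same_sum p p' then cnj (w r p p') * w r' p p' else 0)"
    by (rule sum_swap_outer_inner)
  also have "\<dots> = (\<Sum>p\<in>I\<times>I. \<Sum>p'\<in>I\<times>I. if same_sum p p' then cnj (corr p p') * corr p p' else 0)"
    unfolding corr_def w_def[symmetric]
    by (rule sum.cong[OF refl])+ (simp add: cnj_sum sum_product)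
  finally show ?thesis .
qed

lemma corr_trivial: "p\<in>I\<times>I \<Longrightarrow> p'\<in>I\<times>I \<Longrightarrow> trivial_quad p p' \<Longrightarrow> corr p p' = of_nat n"
proof -
  assume a: "p\<in>I\<times>I" "p'\<in>I\<times>I" "trivial_quad p p'"
  have "corr p p' = (\<Sum>r\<in>NN. 1)"
    unfolding corr_def
  proof (rule sum.cong[OF refl])
    fix r assume r: "r\<in>NN"
    have 1: "cnj (h r (fst p)) * h r (fst p) = 1" "cnj (h r (snd p)) * h r (snd p) = 1"
      using a h_cnj_mult r by auto
    have e: "x * y * cnj x * cnj y = (cnj x * x) * (cnj y * y)" "x * y * cnj y * cnj x = (cnj x * x) * (cnj y * y)"
      for x y :: complex
      by (simp_all add: mult_ac)
    show "h r (fst p) * h r (snd p) * cnj (h r (fst p')) * cnj (h r (snd p')) = 1"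
      using a(3) 1 unfolding trivial_quad_def by (auto simp only: e mult_1_left)
  qed
  then show ?thesis using cardN by simp
qed

lemma same_sum_trivial: "trivial_quad p p' \<Longrightarrow> same_sum p p'"
  unfolding trivial_quad_def same_sum_def using pl_comm by auto

text \<open>Each pair \<open>(a,b)\<close> is trivially equivalent to one pair if \<open>a = b\<close> and to two otherwise,
  so there are \<open>2n^2 - n\<close> trivial quadruples.\<close>
lemma count_trivial_row:
  assumes ab: "a\<in>I" "b\<in>I"
  shows "(\<Sum>p'\<in>I\<times>I. if trivial_quad (a,b) p' then (1::real) else 0) = (if a = b then 1 else 2)"
proof -
  have "(\<Sum>p'\<in>I\<times>I. if trivial_quad (a,b) p' then (1::real) else 0)
      = (\<Sum>c\<in>I. \<Sum>e\<in>I. (if c = a then (if e = b then 1 else 0) else 0)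
          + (if a \<noteq> b then (if c = b then (if e = a then 1 else 0) else 0) else 0))"
    unfolding sum_pairs by (rule sum.cong[OF refl])+ (auto simp: trivial_quad_def)
  also have "\<dots> = (\<Sum>c\<in>I. (if c = a then 1 else 0) + (if a \<noteq> b then (if c = b then 1 else 0) else 0))"
    by (rule sum.cong[OF refl]) (auto simp: sum.distrib ab fin)
  also have "\<dots> = (if a = b then 1 else 2)"
    using ab fin by (simp add: sum.distrib)
  finally show ?thesis .
qed

lemma count_trivial: "(\<Sum>p\<in>I\<times>I. \<Sum>p'\<in>I\<times>I. if trivial_quad p p' then (1::real) else 0) = 2 * real n ^ 2 - real n"
proof -
  have "(\<Sum>p\<in>I\<times>I. \<Sum>p'\<in>I\<times>I. if trivial_quad p p' then (1::real) else 0)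
      = (\<Sum>a\<in>I. \<Sum>b\<in>I. \<Sum>p'\<in>I\<times>I. if trivial_quad (a,b) p' then (1::real) else 0)"
    by (rule sum_pairs)
  also have "\<dots> = (\<Sum>a\<in>I. \<Sum>b\<in>I. 2 - (if a = b then 1 else 0))"
    by (rule sum.cong[OF refl])+ (simp add: count_trivial_row)
  also have "\<dots> = 2 * real n ^ 2 - real n"
    using fin cardI by (simp add: sum_subtractf power2_eq_square algebra_simps)
  finally show ?thesis .
qed

definition excess :: real where
  "excess = (\<Sum>p\<in>I\<times>I. \<Sum>p'\<in>I\<times>I. if same_sum p p' \<and> \<not> trivial_quad p p' then cmod (corr p p') ^ 2 else 0)"

lemma sum_corr_split: "(\<Sum>p\<in>I\<times>I. \<Sum>p'\<in>I\<times>I. if same_sum p p' then cnj (corr p p') * corr p p' else 0)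
   = complex_of_real (real n ^ 2 * (2 * real n ^ 2 - real n) + excess)"
proof -
  have "(\<Sum>p\<in>I\<times>I. \<Sum>p'\<in>I\<times>I. if same_sum p p' then cnj (corr p p') * corr p p' else 0)
     = complex_of_real (\<Sum>p\<in>I\<times>I. \<Sum>p'\<in>I\<times>I. real n ^ 2 * (if trivial_quad p p' then 1 else 0)
         + (if same_sum p p' \<and> \<not> trivial_quad p p' then cmod (corr p p') ^ 2 else 0))"
    unfolding of_real_sum
  proof (rule sum.cong[OF refl])+
    fix p p' assume pp: "p\<in>I\<times>I" "p'\<in>I\<times>I"
    show "(if same_sum p p' then cnj (corr p p') * corr p p' else 0) = complex_of_real (real n ^ 2 * (if trivial_quad p p' then 1 else 0)
         + (if same_sum p p' \<and> \<not> trivial_quad p p' then cmod (corr p p') ^ 2 else 0))"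
      using corr_trivial[OF pp] same_sum_trivial[of p p'] complex_norm_square[of "corr p p'"]
      by (auto simp: mult.commute)
  qed
  also have "\<dots> = complex_of_real (real n ^ 2 * (\<Sum>p\<in>I\<times>I. \<Sum>p'\<in>I\<times>I. if trivial_quad p p' then 1 else 0) + excess)"
  proof -
    have "(\<Sum>p\<in>I\<times>I. \<Sum>p'\<in>I\<times>I. real n ^ 2 * (if trivial_quad p p' then 1 else 0)
         + (if same_sum p p' \<and> \<not> trivial_quad p p' then cmod (corr p p') ^ 2 else 0))
      = (\<Sum>p\<in>I\<times>I. \<Sum>p'\<in>I\<times>I. real n ^ 2 * (if trivial_quad p p' then 1 else 0)) + excess"
      unfolding excess_def sum.distrib[symmetric] by (rule sum.cong[OF refl])+ simp
    then show ?thesis by (simp add: sum_distrib_left)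
  qed
  also have "\<dots> = complex_of_real (real n ^ 2 * (2 * real n ^ 2 - real n) + excess)"
    by (simp only: count_trivial)
  finally show ?thesis .
qed

lemma deviation_excess: "(\<Sum>r\<in>NN. \<Sum>r'\<in>NN. if r = r' then 0 else deviation r r') = real n ^ 2 * excess"
proof -
  have "complex_of_real (\<Sum>r\<in>NN. \<Sum>r'\<in>NN. moment4 r r')
      = complex_of_real (real n ^ 2 * (real n ^ 2 * (2 * real n ^ 2 - real n) + excess))"
    unfolding of_real_sum moment4_energy
    by (simp add: sum_distrib_left[symmetric] sum_energy_corr sum_corr_split)
  then have total: "(\<Sum>r\<in>NN. \<Sum>r'\<in>NN. moment4 r r') = real n ^ 2 * (real n ^ 2 * (2 * real n ^ 2 - real n) + excess)"
    using of_real_eq_iff by blast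
  have "(\<Sum>r\<in>NN. \<Sum>r'\<in>NN. moment4 r r') = (\<Sum>r\<in>NN. \<Sum>r'\<in>NN. (if r = r' then 0 else deviation r r')
      + real n ^ 4 + (if r = r' then real n ^ 5 - real n ^ 4 else 0))"
    by (rule sum.cong[OF refl])+ (auto simp: moment4_diag deviation_moment4)
  also have "\<dots> = (\<Sum>r\<in>NN. \<Sum>r'\<in>NN. if r = r' then 0 else deviation r r') + real n ^ 2 * real n ^ 4
      + real n * (real n ^ 5 - real n ^ 4)"
    using finN cardN by (simp add: sum.distrib power2_eq_square)
  finally have "(\<Sum>r\<in>NN. \<Sum>r'\<in>NN. if r = r' then 0 else deviation r r')
      = real n ^ 2 * (real n ^ 2 * (2 * real n ^ 2 - real n) + excess) - real n ^ 2 * real n ^ 4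
        - real n * (real n ^ 5 - real n ^ 4)"
    using total by linarith
  also have "\<dots> = real n ^ 2 * excess" by (simp add: algebra_simps eval_nat_numeral)
  finally show ?thesis .
qed

lemma unbiased_iff_corr:
  "(\<forall>r\<in>NN. \<forall>r'\<in>NN. r \<noteq> r' \<longrightarrow> (\<forall>k\<in>I. \<forall>k'\<in>I. cmod (fourier (ratio r r') k k') ^ 2 = real n))
   \<longleftrightarrow> (\<forall>p\<in>I\<times>I. \<forall>p'\<in>I\<times>I. same_sum p p' \<and> \<not> trivial_quad p p' \<longrightarrow> corr p p' = 0)"
proof -
  have dev0: "deviation r r' = 0 \<longleftrightarrow> (\<forall>k\<in>I. \<forall>k'\<in>I. cmod (fourier (ratio r r') k k') ^ 2 = real n)" for r r'
    unfolding deviation_def by (subst sum2_nonneg_eq_0_iff) (auto simp: fin)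
  have dev_nonneg: "0 \<le> deviation r r'" for r r'
    unfolding deviation_def by (intro sum_nonneg) auto
  have "(\<forall>r\<in>NN. \<forall>r'\<in>NN. r \<noteq> r' \<longrightarrow> (\<forall>k\<in>I. \<forall>k'\<in>I. cmod (fourier (ratio r r') k k') ^ 2 = real n))
     \<longleftrightarrow> (\<forall>r\<in>NN. \<forall>r'\<in>NN. (if r = r' then 0 else deviation r r') = 0)"
    using dev0 by auto
  also have "\<dots> \<longleftrightarrow> (\<Sum>r\<in>NN. \<Sum>r'\<in>NN. if r = r' then 0 else deviation r r') = 0"
    by (subst sum2_nonneg_eq_0_iff) (auto simp: finN dev_nonneg)
  also have "\<dots> \<longleftrightarrow> excess = 0" using deviation_excess npos by simp
  also have "\<dots> \<longleftrightarrow> (\<forall>p\<in>I\<times>I. \<forall>p'\<in>I\<times>I. same_sum p p' \<and> \<not> trivial_quad p p' \<longrightarrow> corr p p' = 0)"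
    unfolding excess_def by (subst sum2_nonneg_eq_0_iff) (auto simp: fin)
  finally show ?thesis .
qed

end


context twisted_family
begin

lemma mat_entry: "l \<in> I \<Longrightarrow> k \<in> I \<Longrightarrow> mat r l k = chi k l * h r l / of_real (sqrt (real n))"
  unfolding mat_def by simp

lemma sqrt_n_square: "of_real (sqrt (real n)) * of_real (sqrt (real n)) = (of_nat n :: complex)"
  by (simp flip: of_real_mult)

lemma mat_col_inner: "k \<in> I \<Longrightarrow> k' \<in> I \<Longrightarrow>
  inner_c I (col (mat r) k) (col (mat r') k') = fourier (ratio r r') k k' / of_nat n"
  unfolding inner_c_def col_def fourier_def ratio_def sum_divide_distrib
  by (intro sum.cong[OF refl]) (simp add: mat_entry sqrt_n_square mult_ac)

lemma mat_hadamard: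
  assumes r: "r \<in> NN"
  shows "complex_hadamard I (mat r)"
proof -
  have cols: "(\<Sum>j\<in>I. cnj (mat r j i) * mat r j k) = (if i = k then 1 else 0)" if ik: "i \<in> I" "k \<in> I" for i k
    using mat_col_inner[OF ik, of r r] fourier_diag[OF r ik] npos
    by (simp add: inner_c_def col_def)
  have rows: "(\<Sum>j\<in>I. mat r i j * cnj (mat r k j)) = (if i = k then 1 else 0)" if ik: "i \<in> I" "k \<in> I" for i k
  proof -
    have "(\<Sum>j\<in>I. mat r i j * cnj (mat r k j)) = h r i * cnj (h r k) * (\<Sum>j\<in>I. chi j i * cnj (chi j k)) / of_nat n"
      unfolding sum_distrib_left sum_divide_distrib
    proof (rule sum.cong[OF refl])
      fix j assume j: "j \<in> I"
      have "mat r i j * cnj (mat r k j) = cnj (chi j k * h r k / of_real (sqrt (real n))) * (chi j i * h r i / of_real (sqrt (real n)))"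
        by (simp add: mat_entry ik j mult.commute)
      then show "mat r i j * cnj (mat r k j) = h r i * cnj (h r k) * (chi j i * cnj (chi j k)) / of_nat n"
        by (simp add: sqrt_n_square mult_ac)
    qed
    then show ?thesis using orth_conj[OF ik] npos h_cnj_mult[OF r ik(2)] by (simp add: mult.commute)
  qed
  have entries: "cmod (mat r i k) = 1 / sqrt (real (card I))" if "i \<in> I" "k \<in> I" for i k
    using that unimodular[OF that(2,1)] h_unimodular[OF r that(1)] cardI
    by (simp add: mat_entry norm_mult norm_divide)
  show ?thesis unfolding complex_hadamard_def unitary_mat_def using cols rows entries by blast
qed

lemma mat_unbiased_iff: "mutually_unbiased I (mat r) (mat r') \<longleftrightarrow>
  (\<forall>k\<in>I. \<forall>k'\<in>I. cmod (fourier (ratio r r') k k') ^ 2 = real n)"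
proof -
  have "cmod (inner_c I (col (mat r) k) (col (mat r') k')) = 1 / sqrt (real n)
      \<longleftrightarrow> cmod (fourier (ratio r r') k k') ^ 2 = real n" if "k \<in> I" "k' \<in> I" for k k'
    using norm_div_eq_inverse_sqrt_iff[OF norm_ge_zero npos] mat_col_inner[OF that]
    by (simp add: norm_divide)
  then show ?thesis unfolding mutually_unbiased_def cardI by auto
qed

text \<open>If all pairs of distinct twists give unbiased matrices, the matrices are pairwise distinct:
  equal matrices would have \<open>z(k,k) = n\<close> and \<open>|z(k,k)|^2 = n\<close>, forcing \<open>n = 1\<close>.\<close>
lemma mat_inj_if_unbiased:
  assumes mu: "\<forall>r\<in>NN. \<forall>r'\<in>NN. r \<noteq> r' \<longrightarrow> mutually_unbiased I (mat r) (mat r')"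
  shows "inj_on mat NN"
proof (rule inj_onI, rule ccontr)
  fix r r' assume rr: "r \<in> NN" "r' \<in> NN" "mat r = mat r'" "r \<noteq> r'"
  obtain k where k: "k \<in> I" using npos cardI by fastforce
  have "fourier (ratio r r') k k = fourier (ratio r r) k k"
    using mat_col_inner[OF k k, of r r'] mat_col_inner[OF k k, of r r] rr(3) npos by simp
  then have "fourier (ratio r r') k k = of_nat n" using fourier_diag[OF rr(1) k k] by simp
  moreover have "cmod (fourier (ratio r r') k k) ^ 2 = real n"
    using mu rr k mat_unbiased_iff by blast
  ultimately have "n = 1" using npos by (simp add: power2_eq_square)
  then obtain x where "NN = {x}" using cardN card_1_singletonE by blast
  then show False using rr by simp
qed

lemma complete_iff_pairwise_unbiased:
  "complete_MUH I (mat ` NN) \<longleftrightarrow> (\<forall>r\<in>NN. \<forall>r'\<in>NN. r \<noteq> r' \<longrightarrow> mutually_unbiased I (mat r) (mat r'))"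
proof
  assume cm: "complete_MUH I (mat ` NN)"
  then have "card (mat ` NN) = card NN" unfolding complete_MUH_def using cardN cardI by simp
  then have "inj_on mat NN" using eq_card_imp_inj_on finN by blast
  then show "\<forall>r\<in>NN. \<forall>r'\<in>NN. r \<noteq> r' \<longrightarrow> mutually_unbiased I (mat r) (mat r')"
    using cm unfolding complete_MUH_def by (metis image_eqI inj_on_eq_iff)
next
  assume mu: "\<forall>r\<in>NN. \<forall>r'\<in>NN. r \<noteq> r' \<longrightarrow> mutually_unbiased I (mat r) (mat r')"
  then have "card (mat ` NN) = card I"
    using mat_inj_if_unbiased cardN cardI by (simp add: card_image)
  then show "complete_MUH I (mat ` NN)"
    unfolding complete_MUH_def using finN mat_hadamard mu by auto
qed

theorem complete_iff_corr:
  "complete_MUH I (mat ` NN) \<longleftrightarrow>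
   (\<forall>p\<in>I\<times>I. \<forall>p'\<in>I\<times>I. same_sum p p' \<and> \<not> trivial_quad p p' \<longrightarrow> corr p p' = 0)"
  unfolding complete_iff_pairwise_unbiased mat_unbiased_iff unbiased_iff_corr[symmetric] ..

end


section \<open>The groups \<open>\<int>_{d_1} \<times> \<dots> \<times> \<int>_{d_m}\<close>\<close>

lemma zgrp_0: "zgrp 0 d = {\<lambda>_. 0}"
  unfolding zgrp_def by auto

lemma zgrp_Suc: "zgrp (Suc m) d = (\<lambda>(g,t). g(m:=t)) ` (zgrp m d \<times> {0..<int (d m)})"
proof
  show "zgrp (Suc m) d \<subseteq> (\<lambda>(g,t). g(m:=t)) ` (zgrp m d \<times> {0..<int (d m)})"
  proof
    fix g assume g: "g \<in> zgrp (Suc m) d"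
    have "g = (\<lambda>(g,t). g(m:=t)) (g(m:=0), g m)" by simp
    moreover have "(g(m:=0), g m) \<in> zgrp m d \<times> {0..<int (d m)}"
      using g unfolding zgrp_def by auto
    ultimately show "g \<in> (\<lambda>(g,t). g(m:=t)) ` (zgrp m d \<times> {0..<int (d m)})" by blast
  qed
next
  show "(\<lambda>(g,t). g(m:=t)) ` (zgrp m d \<times> {0..<int (d m)}) \<subseteq> zgrp (Suc m) d"
    unfolding zgrp_def by (auto simp: less_Suc_eq)
qed

lemma zgrp_Suc_inj: "inj_on (\<lambda>(g,t). g(m:=t)) (zgrp m d \<times> {0..<int (d m)})"
proof (rule inj_onI, clarify)
  fix g t g' t' assume a: "g \<in> zgrp m d" "g' \<in> zgrp m d" "g(m := t) = g'(m := t')"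
  then have "t = t'" by (metis fun_upd_same)
  moreover have "g = g'"
  proof
    fix j show "g j = g' j"
      using a unfolding zgrp_def by (cases "j = m") (auto dest: fun_cong[of _ _ j])
  qed
  ultimately show "g = g' \<and> t = t'" by simp
qed

lemma finite_zgrp: "finite (zgrp m d)"
  by (induction m) (auto simp: zgrp_0 zgrp_Suc)

lemma sum_zgrp_prod:
  fixes \<phi> :: "nat \<Rightarrow> int \<Rightarrow> 'a::comm_semiring_1"
  shows "(\<Sum>g\<in>zgrp m d. \<Prod>j<m. \<phi> j (g j)) = (\<Prod>j<m. \<Sum>t\<in>{0..<int (d j)}. \<phi> j t)"
proof (induction m)
  case 0 then show ?case by (simp add: zgrp_0)
next
  case (Suc m)
  have "(\<Sum>g\<in>zgrp (Suc m) d. \<Prod>j<Suc m. \<phi> j (g j))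
      = (\<Sum>x\<in>zgrp m d \<times> {0..<int (d m)}. \<Prod>j<Suc m. \<phi> j (((\<lambda>(g,t). g(m:=t)) x) j))"
    unfolding zgrp_Suc by (rule sum.reindex[OF zgrp_Suc_inj, unfolded comp_def])
  also have "\<dots> = (\<Sum>g\<in>zgrp m d. \<Sum>t\<in>{0..<int (d m)}. (\<Prod>j<m. \<phi> j (g j)) * \<phi> m t)"
    by (subst sum.cartesian_product) (rule sum.cong[OF refl], auto simp: lessThan_Suc zgrp_def mult.commute)
  also have "\<dots> = (\<Sum>g\<in>zgrp m d. \<Prod>j<m. \<phi> j (g j)) * (\<Sum>t\<in>{0..<int (d m)}. \<phi> m t)"
    by (simp add: sum_product)
  also have "\<dots> = (\<Prod>j<Suc m. \<Sum>t\<in>{0..<int (d j)}. \<phi> j t)"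
    using Suc by (simp add: lessThan_Suc mult.commute)
  finally show ?case .
qed

lemma card_zgrp: "card (zgrp m d) = (\<Prod>j<m. d j)"
proof -
  have "real (card (zgrp m d)) = (\<Sum>g\<in>zgrp m d. \<Prod>j<m. (\<lambda>j t. (1::real)) j (g j))" by simp
  also have "\<dots> = (\<Prod>j<m. \<Sum>t\<in>{0..<int (d j)}. (1::real))" by (rule sum_zgrp_prod)
  also have "\<dots> = real (\<Prod>j<m. d j)" by simp
  finally show ?thesis by linarith
qed

lemma card_zgrp_pos: "\<forall>j<m. 0 < d j \<Longrightarrow> 0 < card (zgrp m d)"
  by (simp add: card_zgrp)

lemma zadd_in: "\<forall>j<m. 0 < d j \<Longrightarrow> zadd m d a b \<in> zgrp m d"
  unfolding zadd_def zgrp_def by auto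

lemma zadd_comm: "zadd m d a b = zadd m d b a"
  unfolding zadd_def by (auto simp: add.commute)

lemma zgrp_eq_iff_cong:
  assumes "a \<in> zgrp m d" "b \<in> zgrp m d"
  shows "a = b \<longleftrightarrow> (\<forall>j<m. int (d j) dvd b j - a j)"
proof
  assume cong: "\<forall>j<m. int (d j) dvd b j - a j"
  show "a = b"
  proof
    fix j show "a j = b j"
    proof (cases "j < m")
      case True
      then have "b j mod int (d j) = a j mod int (d j)" using cong by (simp add: mod_eq_dvd_iff)
      then show ?thesis using assms True unfolding zgrp_def by auto
    next
      case False then show ?thesis using assms unfolding zgrp_def by auto
    qed
  qed
qed simp

section \<open>Roots of unity\<close>

lemma cis_eq_1: "cis x = 1 \<longleftrightarrow> (\<exists>k::int. x = 2 * pi * of_int k)"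
proof
  assume "cis x = 1"
  then have "cos x = 1" by (metis Re_complex_of_real cis.sel(1) of_real_1)
  then show "\<exists>k::int. x = 2 * pi * of_int k" by (auto simp: cos_one_2pi_int mult_ac)
qed auto

lemma cis_period: "cis (x + 2 * pi * of_int N) = cis x"
  by (simp add: cis_mult[symmetric] cis_eq_1[of "2 * pi * of_int N"])

lemma sum_cis_geometric:
  assumes D: "0 < D"
  shows "(\<Sum>t\<in>{0..<int D}. cis (2 * pi * of_int t * x / real D)) = (\<Sum>i<D. cis (2 * pi * x / real D) ^ i)"
proof -
  have "(\<Sum>t\<in>{0..<int D}. cis (2 * pi * of_int t * x / real D)) = (\<Sum>i\<in>{..<D}. cis (2 * pi * of_int (int i) * x / real D))"
    by (simp add: image_atLeastZeroLessThan_int sum.reindex)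
  also have "\<dots> = (\<Sum>i<D. cis (2 * pi * x / real D) ^ i)"
    by (simp add: DeMoivre mult_ac)
  finally show ?thesis .
qed

lemma int_not_multiple_iff:
  assumes D: "0 < D"
  shows "(\<exists>k::int. x = of_int k \<and> \<not> int D dvd k) \<longleftrightarrow>
    (\<exists>k::int. x = of_int k) \<and> \<not> (\<exists>k::int. x = real D * of_int k)"
proof -
  have "x = real D * of_int q \<longleftrightarrow> k = int D * q" if "x = of_int k" for k q :: int
    using that by (metis of_int_eq_iff of_int_mult of_int_of_nat_eq)
  then show ?thesis by (auto simp: dvd_def)
qed

lemma sum_cis_eq_0_iff:
  assumes D: "0 < D"
  shows "(\<Sum>t\<in>{0..<int D}. cis (2 * pi * of_int t * x / real D)) = 0 \<longleftrightarrow> (\<exists>k::int. x = of_int k \<and> \<not> int D dvd k)"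
proof -
  define w where "w = cis (2 * pi * x / real D)"
  have "w ^ D = cis (2 * pi * x)" unfolding w_def DeMoivre using D by simp
  then have wD: "w ^ D = 1 \<longleftrightarrow> (\<exists>k::int. x = of_int k)"
    using cis_eq_1[of "2 * pi * x"] by simp
  have w1: "w = 1 \<longleftrightarrow> (\<exists>k::int. x = real D * of_int k)"
    unfolding w_def cis_eq_1 using D by (auto simp: field_simps)
  have "(\<Sum>t\<in>{0..<int D}. cis (2 * pi * of_int t * x / real D)) = (if w = 1 then of_nat D else (1 - w ^ D) / (1 - w))"
    unfolding sum_cis_geometric[OF D] w_def[symmetric] by (rule sum_gp_strict)
  then have "(\<Sum>t\<in>{0..<int D}. cis (2 * pi * of_int t * x / real D)) = 0 \<longleftrightarrow> w ^ D = 1 \<and> w \<noteq> 1"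
    using D by auto
  then show ?thesis unfolding wD w1 int_not_multiple_iff[OF D] .
qed

lemma sum_cis_int:
  assumes D: "0 < D"
  shows "(\<Sum>t\<in>{0..<int D}. cis (2 * pi * of_int t * of_int z / real D)) = (if int D dvd z then of_nat D else 0)"
proof (cases "int D dvd z")
  case True
  then obtain j where j: "z = int D * j" by auto
  have "cis (2 * pi * of_int t * of_int z / real D) = 1" for t :: int
  proof -
    have "2 * pi * of_int t * of_int z / real D = 2 * pi * of_int (t * j)" using D j by (simp add: field_simps)
    then show ?thesis by (simp add: cis_eq_1)
  qed
  then show ?thesis using True D by simp
next
  case False
  then show ?thesis using sum_cis_eq_0_iff[OF D, of "of_int z"] by auto
qed

section \<open>Characters of the groups\<close>

lemma chiN_prod: "chiN m d r x = (\<Prod>j<m. cis (2 * pi * of_int (r j) * x j / real (d j)))"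
  unfolding chiN_def exp_sum[OF finite_lessThan]
proof (rule prod.cong[OF refl])
  fix j
  have "2 * complex_of_real pi * \<i> * of_int (r j) * complex_of_real (x j) / of_nat (d j)
      = \<i> * complex_of_real (2 * pi * of_int (r j) * x j / real (d j))"
    by simp
  then show "exp (2 * complex_of_real pi * \<i> * of_int (r j) * complex_of_real (x j) / of_nat (d j))
      = cis (2 * pi * of_int (r j) * x j / real (d j))"
    by (simp only: cis_conv_exp)
qed

lemma chiN_unimodular: "cmod (chiN m d r x) = 1"
  by (simp add: chiN_prod prod_norm[symmetric])

lemma chiN_add: "chiN m d r x * chiN m d r y = chiN m d r (\<lambda>j. x j + y j)"
  unfolding chiN_prod prod.distrib[symmetric] cis_mult
  by (simp add: algebra_simps add_divide_distrib)

lemma chiN_cnj: "cnj (chiN m d r x) = chiN m d r (\<lambda>j. - x j)"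
  unfolding chiN_prod cnj_prod cis_cnj by simp

lemma chiN_period:
  assumes "\<forall>j<m. 0 < d j" and "\<forall>j<m. \<exists>q::int. x j = y j + real (d j) * of_int q"
  shows "chiN m d r x = chiN m d r y"
  unfolding chiN_prod
proof (rule prod.cong[OF refl])
  fix j assume "j \<in> {..<m}"
  then obtain q :: int where q: "x j = y j + real (d j) * of_int q" and dj: "0 < d j" using assms by auto
  have e: "2 * pi * of_int (r j) * x j / real (d j) = 2 * pi * of_int (r j) * y j / real (d j) + 2 * pi * of_int (r j * q)"
    using dj unfolding q by (simp add: field_simps)
  show "cis (2 * pi * of_int (r j) * x j / real (d j)) = cis (2 * pi * of_int (r j) * y j / real (d j))"
    unfolding e by (rule cis_period)
qed

lemma sum_chiN: "(\<Sum>r\<in>zgrp m d. chiN m d r x) = (\<Prod>j<m. \<Sum>t\<in>{0..<int (d j)}. cis (2 * pi * of_int t * x j / real (d j)))"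
  unfolding chiN_prod by (rule sum_zgrp_prod[where \<phi>="\<lambda>j t. cis (2 * pi * of_int t * x j / real (d j))"])

lemma sum_chiN_eq_0_iff:
  assumes "\<forall>j<m. 0 < d j"
  shows "(\<Sum>r\<in>zgrp m d. chiN m d r x) = 0 \<longleftrightarrow> (\<exists>j<m. \<exists>k::int. x j = of_int k \<and> \<not> int (d j) dvd k)"
  unfolding sum_chiN using sum_cis_eq_0_iff assms by (simp add: prod_zero_iff) blast

lemma sum_chiN_int:
  assumes d_pos: "\<forall>j<m. 0 < d j"
  shows "(\<Sum>r\<in>zgrp m d. chiN m d r (\<lambda>j. of_int (x j))) = (if \<forall>j<m. int (d j) dvd x j then of_nat (card (zgrp m d)) else 0)"
proof -
  have "(\<Sum>r\<in>zgrp m d. chiN m d r (\<lambda>j. of_int (x j))) = (\<Prod>j<m. if int (d j) dvd x j then of_nat (d j) else 0)"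
    unfolding sum_chiN using d_pos by (intro prod.cong[OF refl]) (simp add: sum_cis_int)
  then show ?thesis unfolding card_zgrp by (auto simp: prod_zero_iff)
qed

lemma chiG_chiN: "chiG m d a b = chiN m d a (\<lambda>j. of_int (b j))"
  unfolding chiG_def chiN_def by simp

lemma chiG_sym: "chiG m d a b = chiG m d b a"
  unfolding chiG_def by (simp add: mult_ac)

lemma chiG_mult:
  assumes d_pos: "\<forall>j<m. 0 < d j"
  shows "chiG m d k a * chiG m d k b = chiG m d k (zadd m d a b)"
  unfolding chiG_chiN chiN_add
proof (rule chiN_period[OF d_pos], intro allI impI)
  fix j assume "j < m"
  then have "a j + b j = zadd m d a b j + int (d j) * ((a j + b j) div int (d j))"
    unfolding zadd_def by simp
  then show "\<exists>q::int. of_int (a j) + of_int (b j) = real_of_int (zadd m d a b j) + real (d j) * of_int q"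
    by (metis of_int_add of_int_mult of_int_of_nat_eq)
qed

lemma chiG_orth:
  assumes d_pos: "\<forall>j<m. 0 < d j" and a: "a \<in> zgrp m d" and b: "b \<in> zgrp m d"
  shows "(\<Sum>k\<in>zgrp m d. cnj (chiG m d k a) * chiG m d k b) = (if a = b then of_nat (card (zgrp m d)) else 0)"
proof -
  have "cnj (chiG m d k a) * chiG m d k b = chiN m d k (\<lambda>j. of_int (b j - a j))" for k
    unfolding chiG_chiN chiN_cnj chiN_add by simp
  then show ?thesis
    using sum_chiN_int[OF d_pos, of "\<lambda>j. b j - a j"] zgrp_eq_iff_cong[OF a b] by simp
qed

section \<open>The set \<open>\<tilde>N^*\<close>\<close>

lemma rmod_bounds:
  assumes D: "0 < D"
  shows "0 \<le> rmod x (real D)" "rmod x (real D) < real D"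
proof -
  have Dr: "0 < real D" using D by simp
  have "real D * real_of_int \<lfloor>x / real D\<rfloor> \<le> x"
    using of_int_floor_le[of "x / real D"] pos_le_divide_eq[OF Dr] by (metis mult.commute)
  then show "0 \<le> rmod x (real D)" unfolding rmod_def by simp
  have "x < real D * real_of_int \<lfloor>x / real D\<rfloor> + real D"
    using real_of_int_floor_add_one_gt[of "x / real D"] Dr by (simp add: pos_divide_less_eq algebra_simps)
  then show "rmod x (real D) < real D" unfolding rmod_def by simp
qed

lemma rmod_int_not_multiple_iff:
  "(\<exists>k::int. rmod x (real D) = of_int k \<and> \<not> int D dvd k) \<longleftrightarrow> (\<exists>k::int. x = of_int k \<and> \<not> int D dvd k)"
proof -
  define F where "F = \<lfloor>x / real D\<rfloor>"
  have r: "rmod x (real D) = x - real D * of_int F" unfolding rmod_def F_def by simp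
  show ?thesis
  proof
    assume "\<exists>k::int. rmod x (real D) = of_int k \<and> \<not> int D dvd k"
    then obtain k where k: "rmod x (real D) = of_int k" "\<not> int D dvd k" by auto
    have "x = of_int (k + int D * F)" using k(1) r by simp
    moreover have "\<not> int D dvd (k + int D * F)" using k(2) by (simp add: dvd_add_left_iff)
    ultimately show "\<exists>k::int. x = of_int k \<and> \<not> int D dvd k" by blast
  next
    assume "\<exists>k::int. x = of_int k \<and> \<not> int D dvd k"
    then obtain k where k: "x = of_int k" "\<not> int D dvd k" by auto
    have "rmod x (real D) = of_int (k - int D * F)" using k(1) r by simp
    moreover have "\<not> int D dvd (k - int D * F)" using k(2) by (simp add: dvd_diff_left_iff)
    ultimately show "\<exists>k::int. rmod x (real D) = of_int k \<and> \<not> int D dvd k" by blast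
  qed
qed

lemma tcomb_in_tstar_iff:
  assumes "\<forall>j<m. 0 < d j"
  shows "tcomb m d a b c e \<in> tstar m d \<longleftrightarrow> (\<exists>j<m. \<exists>k::int. a j + b j - c j - e j = of_int k \<and> \<not> int (d j) dvd k)"
proof -
  have "tcomb m d a b c e \<in> rtorus m d"
    unfolding rtorus_def tcomb_def using rmod_bounds assms by auto
  then show ?thesis unfolding tstar_def tcomb_def using rmod_int_not_multiple_iff by auto
qed

lemma sum_chiN_comb_eq_0_iff:
  assumes "\<forall>j<m. 0 < d j"
  shows "(\<Sum>r\<in>zgrp m d. chiN m d r x1 * chiN m d r x2 * cnj (chiN m d r x3) * cnj (chiN m d r x4)) = 0
    \<longleftrightarrow> tcomb m d x1 x2 x3 x4 \<in> tstar m d"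
proof -
  have "chiN m d r x1 * chiN m d r x2 * cnj (chiN m d r x3) * cnj (chiN m d r x4)
      = chiN m d r (\<lambda>j. x1 j + x2 j - x3 j - x4 j)" for r
    unfolding chiN_cnj chiN_add by simp
  then show ?thesis unfolding tcomb_in_tstar_iff[OF assms] sum_chiN_eq_0_iff[OF assms, symmetric] by simp
qed

lemma twisted_family_zgrp:
  assumes d_pos: "\<forall>j<m. 0 < d j" and d'_pos: "\<forall>j<m'. 0 < d' j"
    and same_order: "card (zgrp m d) = card (zgrp m' d')"
  shows "twisted_family (zgrp m d) (chiG m d) (zadd m d) (card (zgrp m d))
           (zgrp m' d') (\<lambda>r l. chiN m' d' r (f l))"
proof unfold_locales
  show "finite (zgrp m d)" "finite (zgrp m' d')" by (rule finite_zgrp)+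
  show "0 < card (zgrp m d)" using d_pos by (rule card_zgrp_pos)
qed (use assms zadd_in zadd_comm chiG_mult chiG_orth chiG_sym chiN_unimodular in
      \<open>auto simp: chiG_chiN\<close>)

theorem theorem11:
  fixes m m' :: nat and d d' :: "nat \<Rightarrow> nat"
    and f :: "(nat \<Rightarrow> int) \<Rightarrow> (nat \<Rightarrow> real)"
  assumes d_pos: "\<forall>j<m. 0 < d j"
    and d'_pos: "\<forall>j<m'. 0 < d' j"
    and same_order: "card (zgrp m d) = card (zgrp m' d')"
    and f_into: "\<forall>g\<in>zgrp m d. f g \<in> rtorus m' d'"
  shows "complete_MUH (zgrp m d) ((\<lambda>r. Mr m d m' d' f r) ` zgrp m' d') \<longleftrightarrow>
    (\<forall>g1\<in>zgrp m d. \<forall>g2\<in>zgrp m d. \<forall>g3\<in>zgrp m d. \<forall>g4\<in>zgrp m d.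
       zadd m d g1 g2 = zadd m d g3 g4 \<and> {#g1, g2#} \<noteq> {#g3, g4#} \<longrightarrow>
       tcomb m' d' (f g1) (f g2) (f g3) (f g4) \<in> tstar m' d')"
proof -
  interpret T: twisted_family "zgrp m d" "chiG m d" "zadd m d" "card (zgrp m d)"
      "zgrp m' d'" "\<lambda>r l. chiN m' d' r (f l)"
    using d_pos d'_pos same_order by (rule twisted_family_zgrp)
  have mat: "(\<lambda>r. Mr m d m' d' f r) = T.mat"
    by (intro ext) (simp add: Mr_def T.mat_def)
  have corr: "T.corr (a, b) (c, e) = 0 \<longleftrightarrow> tcomb m' d' (f a) (f b) (f c) (f e) \<in> tstar m' d'" for a b c e
    unfolding T.corr_def using sum_chiN_comb_eq_0_iff[OF d'_pos] by simp
  have multiset: "{#a, b#} = {#c, e#} \<longleftrightarrow> (a = c \<and> b = e) \<or> (a = e \<and> b = c)" for a b c e :: "nat \<Rightarrow> int"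
    by (auto simp: add_eq_conv_ex)
  show ?thesis
    unfolding mat T.complete_iff_corr T.same_sum_def T.trivial_quad_def corr[symmetric] multiset
    by auto
qed

end
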